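(* For every edge $S\xrightarrow{i}T$ of $L^{\mathrm{skew}}_{A_{n-1}}(P/Q)$, the numbers $X_{T,S}$ and $Y_{S,T}$ defined below (all of whose denominators are nonzero) are positive rational numbers.
   Context: Fix integers $m\ge n\ge 2$ and weakly decreasing $m$-tuples of nonnegative integers $P=(P_1,\dots,P_m)$ and $Q=(Q_1,\dots,Q_m)$ with $Q_r\le P_r$ for all $r$. The skew shape $P/Q$ is the set of cells $(r,c)$ (row $r$, column $c$, matrix convention) with $Q_r<c\le P_r$; assume no column of $P/Q$ contains more than $n$ cells. $L^{\mathrm{skew}}_{A_{n-1}}(P/Q)$ is the set of semistandard tableaux $T$ of shape $P/Q$ with entries in $\{1,\dots,n\}$ (entries weakly increase left to right along rows and strictly increase top to bottom down columns), partially ordered by $S\le T$ iff $S_{r,c}\ge T_{r,c}$ for every cell $(r,c)$. The Hasse diagram edges are colored: $S\to T$ is a covering iff $S,T$ differ in exactly one cell $(r,c)$ and $S_{r,c}=T_{r,c}+1$; this edge gets color $i:=T_{r,c}\in\{1,\dots,n-1\}$, written $S\xrightarrow{i}T$. GT parallelograms: for $0\le i\le n$ put $C_i:=\{i-(m-1),\dots,i-1,i\}$. To each tableau $T$ associate the integer array $(g_{i,j}(T))_{0\le i\le n,\,j\in C_i}$ defined by $g_{i,i+1-r}(T):=Q_r+|\{c:(r,c)\in P/Q,\ T_{r,c}\le i\}|$ for $1\le r\le m$. (Thus $g_{0,j}=Q_{1-j}$, $g_{n,j}=P_{n+1-j}$, and $\max(g_{i-1,j-1},g_{i+1,j})\le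 g_{i,j}\le\min(g_{i-1,j},g_{i+1,j+1})$ whenever the indices are defined.) One has $S\xrightarrow{i}T$ iff the arrays of $S$ and $T$ agree except at exactly one position $(i,j)$, where $g_{i,j}(T)=g_{i,j}(S)+1$. Edge coefficients: for an edge $S\xrightarrow{i}T$ with differing position $(i,j)$, writing $g_{p,q}:=g_{p,q}(T)$, $$X_{T,S}:=-\frac{\prod_{k\in C_{i+1}}(g_{i,j}-g_{i+1,k}+j-k)}{\prod_{k\in C_i\setminus\{j\}}(g_{i,j}-g_{i,k}+j-k-1)},\qquad Y_{S,T}:=\frac{\prod_{k\in C_{i-1}}(g_{i,j}-g_{i-1,k}+j-k-1)}{\prod_{k\in C_i\setminus\{j\}}(g_{i,j}-g_{i,k}+j-k)}.$$ *)

theory Defs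
  imports Main "HOL.Rat"
begin

definition skew_cells :: "nat \<Rightarrow> (nat \<Rightarrow> nat) \<Rightarrow> (nat \<Rightarrow> nat) \<Rightarrow> (nat \<times> nat) set" where
  "skew_cells m P Q = {(r, c). 1 \<le> r \<and> r \<le> m \<and> Q r < c \<and> c \<le> P r}"

definition weakly_decr :: "nat \<Rightarrow> (nat \<Rightarrow> nat) \<Rightarrow> bool" where
  "weakly_decr m P \<longleftrightarrow> (\<forall>r r'. 1 \<le> r \<and> r \<le> r' \<and> r' \<le> m \<longrightarrow> P r' \<le> P r)"

text \<open>Semistandard tableau of shape P/Q with entries in {1..n}; only values on cells matter.\<close>
definition sstab :: "nat \<Rightarrow> nat \<Rightarrow> (nat \<Rightarrow> nat) \<Rightarrow> (nat \<Rightarrow> nat) \<Rightarrow> (nat \<Rightarrow> nat \<Rightarrow> nat) \<Rightarrow> bool" where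
  "sstab n m P Q T \<longleftrightarrow>
     (\<forall>(r, c) \<in> skew_cells m P Q. 1 \<le> T r c \<and> T r c \<le> n) \<and>
     (\<forall>r c c'. (r, c) \<in> skew_cells m P Q \<and> (r, c') \<in> skew_cells m P Q \<and> c \<le> c' \<longrightarrow> T r c \<le> T r c') \<and>
     (\<forall>r r' c. (r, c) \<in> skew_cells m P Q \<and> (r', c) \<in> skew_cells m P Q \<and> r < r' \<longrightarrow> T r c < T r' c)"

definition skew_edge :: "nat \<Rightarrow> nat \<Rightarrow> (nat \<Rightarrow> nat) \<Rightarrow> (nat \<Rightarrow> nat) \<Rightarrow>
    (nat \<Rightarrow> nat \<Rightarrow> nat) \<Rightarrow> nat \<Rightarrow> (nat \<Rightarrow> nat \<Rightarrow> nat) \<Rightarrow> bool" where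
  "skew_edge n m P Q S i T \<longleftrightarrow> sstab n m P Q S \<and> sstab n m P Q T \<and>
     (\<exists>r c. (r, c) \<in> skew_cells m P Q \<and> S r c = T r c + 1 \<and> T r c = i \<and>
        (\<forall>(r', c') \<in> skew_cells m P Q. (r', c') \<noteq> (r, c) \<longrightarrow> S r' c' = T r' c'))"

definition Cset :: "nat \<Rightarrow> int \<Rightarrow> int set" where
  "Cset m i = {i - (int m - 1) .. i}"

definition gt :: "nat \<Rightarrow> (nat \<Rightarrow> nat) \<Rightarrow> (nat \<Rightarrow> nat) \<Rightarrow> (nat \<Rightarrow> nat \<Rightarrow> nat) \<Rightarrow> int \<Rightarrow> int \<Rightarrow> int" where
  "gt m P Q T i j = (let r = nat (i + 1 - j) in
      int (Q r) + int (card {c. (r, c) \<in> skew_cells m P Q \<and> int (T r c) \<le> i}))"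

definition Xnum :: "nat \<Rightarrow> (nat \<Rightarrow> nat) \<Rightarrow> (nat \<Rightarrow> nat) \<Rightarrow> (nat \<Rightarrow> nat \<Rightarrow> nat) \<Rightarrow> int \<Rightarrow> int \<Rightarrow> rat" where
  "Xnum m P Q T i j = (\<Prod>k\<in>Cset m (i + 1). of_int (gt m P Q T i j - gt m P Q T (i + 1) k + j - k))"

definition Xden :: "nat \<Rightarrow> (nat \<Rightarrow> nat) \<Rightarrow> (nat \<Rightarrow> nat) \<Rightarrow> (nat \<Rightarrow> nat \<Rightarrow> nat) \<Rightarrow> int \<Rightarrow> int \<Rightarrow> rat" where
  "Xden m P Q T i j = (\<Prod>k\<in>Cset m i - {j}. of_int (gt m P Q T i j - gt m P Q T i k + j - k - 1))"

definition Ynum :: "nat \<Rightarrow> (nat \<Rightarrow> nat) \<Rightarrow> (nat \<Rightarrow> nat) \<Rightarrow> (nat \<Rightarrow> nat \<Rightarrow> nat) \<Rightarrow> int \<Rightarrow> int \<Rightarrow> rat" where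
  "Ynum m P Q T i j = (\<Prod>k\<in>Cset m (i - 1). of_int (gt m P Q T i j - gt m P Q T (i - 1) k + j - k - 1))"

definition Yden :: "nat \<Rightarrow> (nat \<Rightarrow> nat) \<Rightarrow> (nat \<Rightarrow> nat) \<Rightarrow> (nat \<Rightarrow> nat \<Rightarrow> nat) \<Rightarrow> int \<Rightarrow> int \<Rightarrow> rat" where
  "Yden m P Q T i j = (\<Prod>k\<in>Cset m i - {j}. of_int (gt m P Q T i j - gt m P Q T i k + j - k))"

text \<open>X_{T,S} and Y_{S,T}, computed from the array of T at position (i,j).\<close>
definition Xcoef :: "nat \<Rightarrow> (nat \<Rightarrow> nat) \<Rightarrow> (nat \<Rightarrow> nat) \<Rightarrow> (nat \<Rightarrow> nat \<Rightarrow> nat) \<Rightarrow> int \<Rightarrow> int \<Rightarrow> rat" where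
  "Xcoef m P Q T i j = - (Xnum m P Q T i j / Xden m P Q T i j)"

definition Ycoef :: "nat \<Rightarrow> (nat \<Rightarrow> nat) \<Rightarrow> (nat \<Rightarrow> nat) \<Rightarrow> (nat \<Rightarrow> nat \<Rightarrow> nat) \<Rightarrow> int \<Rightarrow> int \<Rightarrow> rat" where
  "Ycoef m P Q T i j = Ynum m P Q T i j / Yden m P Q T i j"

end

theory Submission
  imports Defs
begin

text \<open>
  Read row by row, the GT parallelogram of a tableau is the function
  \<open>h r a = Q\<^sub>r + #{c : T\<^sub>r\<^sub>,\<^sub>c \<le> a}\<close>, and the parallelogram inequalities say that
  \<open>h r\<close> is monotone in the level \<open>a\<close> while \<open>h (r + 1) (a + 1) \<le> h r a\<close>; in particular
  \<open>h r a\<close> is antitone in \<open>r\<close>.  Along an edge \<open>S \<rightarrow>\<^sub>i T\<close> exactly one entry changes,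
  \<open>h\<^sub>S s i = h\<^sub>T s i - 1\<close>, and both arrays satisfy the inequalities.  Indexing the
  factors of \<open>X\<close> and \<open>Y\<close> by rows, these inequalities determine the sign of every factor:
  it is negative exactly for the rows above \<open>s\<close> (and for \<open>s\<close> itself in the numerator
  of \<open>X\<close>).  Hence the numerator and denominator of \<open>Y\<close> have the same sign and
  those of \<open>X\<close> opposite signs.
\<close>

lemma sgn_prod:
  fixes f :: "'a \<Rightarrow> 'b::linordered_idom"
  shows "sgn (prod f A) = (\<Prod>x\<in>A. sgn (f x))"
  by (induction A rule: infinite_finite_induct) (simp_all add: sgn_mult)

lemma sgn_prod_sign_pattern:
  fixes f :: "nat \<Rightarrow> int"
  assumes "finite R" and "\<And>r. r \<in> R \<Longrightarrow> sgn (f r) = (if r < t then -1 else 1)"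
  shows "sgn (\<Prod>r\<in>R. f r) = (-1) ^ card {r\<in>R. r < t}"
proof -
  have "sgn (\<Prod>r\<in>R. f r) = (\<Prod>r\<in>R. if r < t then -1 else 1)"
    unfolding sgn_prod using assms(2) by (rule prod.cong[OF refl])
  also have "\<dots> = (-1) ^ card {r\<in>R. r < t}"
    using assms(1) by (simp add: prod.If_cases Int_def conj_commute)
  finally show ?thesis .
qed

lemma of_int_divide_pos_if_sgn_eq:
  assumes "sgn A = (-1) ^ k" and "sgn B = (-1) ^ k"
  shows "(0::'a::linordered_field) < of_int A / of_int B"
proof -
  have "B \<noteq> 0" using assms(2) by (metis power_eq_0_iff sgn_0 zero_neq_neg_one)
  moreover have "sgn A = sgn B" using assms by simp
  ultimately show ?thesis by (auto simp: sgn_if zero_less_divide_iff split: if_splits)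
qed

lemma of_int_minus_divide_pos_if_sgn_eq_minus:
  "sgn A = - ((-1) ^ k) \<Longrightarrow> sgn B = (-1) ^ k \<Longrightarrow> (0::'a::linordered_field) < - (of_int A / of_int B)"
  using of_int_divide_pos_if_sgn_eq[of "- A" k B] by simp

definition gt_inequalities :: "nat \<Rightarrow> (nat \<Rightarrow> int \<Rightarrow> int) \<Rightarrow> bool" where
  "gt_inequalities m h \<longleftrightarrow>
     (\<forall>r a. h r a \<le> h r (a + 1)) \<and> (\<forall>r a. 1 \<le> r \<longrightarrow> r < m \<longrightarrow> h (Suc r) (a + 1) \<le> h r a)"

lemma gt_inequalities_mono:
  "gt_inequalities m h \<Longrightarrow> h r a \<le> h r (a + 1)"
  by (simp add: gt_inequalities_def)

lemma gt_inequalities_interlace: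
  "gt_inequalities m h \<Longrightarrow> 1 \<le> r \<Longrightarrow> r < m \<Longrightarrow> h (Suc r) (a + 1) \<le> h r a"
  by (simp add: gt_inequalities_def)

lemma gt_inequalities_antimono_row:
  assumes h: "gt_inequalities m h" and "1 \<le> r" "r \<le> r'" "r' \<le> m"
  shows "h r' a \<le> h r a"
  using assms(3,4)
proof (induction r' rule: dec_induct)
  case (step k)
  have "h (Suc k) a \<le> h (Suc k) (a + 1)" by (rule gt_inequalities_mono[OF h])
  also have "\<dots> \<le> h k a" using step assms(2) by (intro gt_inequalities_interlace[OF h]) auto
  finally show ?case using step by simp
qed simp

definition row_count :: "nat \<Rightarrow> (nat \<Rightarrow> nat) \<Rightarrow> (nat \<Rightarrow> nat) \<Rightarrow> (nat \<Rightarrow> nat \<Rightarrow> nat) \<Rightarrow> nat \<Rightarrow> int \<Rightarrow> int" where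
  "row_count m P Q U r a = int (Q r) + int (card {c. (r, c) \<in> skew_cells m P Q \<and> int (U r c) \<le> a})"

lemma gt_eq_row_count: "gt m P Q U a k = row_count m P Q U (nat (a + 1 - k)) a"
  by (simp add: gt_def row_count_def Let_def)

lemma finite_row_cells: "finite {c. (r, c) \<in> skew_cells m P Q \<and> X c}"
  by (rule finite_subset[of _ "{..P r}"]) (auto simp: skew_cells_def)

lemma row_count_mono: "row_count m P Q U r a \<le> row_count m P Q U r (a + 1)"
proof -
  have "card {c. (r, c) \<in> skew_cells m P Q \<and> int (U r c) \<le> a}
        \<le> card {c. (r, c) \<in> skew_cells m P Q \<and> int (U r c) \<le> a + 1}"
    by (rule card_mono[OF finite_row_cells]) auto
  thus ?thesis by (simp add: row_count_def)
qed

text \<open>Strict increase down the columns: a cell of row \<open>r + 1\<close> with entry \<open>\<le> a + 1\<close> either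
  lies left of row \<open>r\<close>, i.e. in \<open>]Q\<^sub>r\<^sub>+\<^sub>1, Q\<^sub>r]\<close>, or sits below a cell of row \<open>r\<close> with entry \<open>\<le> a\<close>.\<close>
lemma row_count_interlace:
  assumes U: "sstab n m P Q U" and "weakly_decr m P" "weakly_decr m Q"
    and r: "1 \<le> r" "r < m"
  shows "row_count m P Q U (Suc r) (a + 1) \<le> row_count m P Q U r a"
proof -
  let ?A = "{c. (Suc r, c) \<in> skew_cells m P Q \<and> int (U (Suc r) c) \<le> a + 1}"
  let ?B = "{c. (r, c) \<in> skew_cells m P Q \<and> int (U r c) \<le> a}"
  have Q_le: "Q (Suc r) \<le> Q r" and P_le: "P (Suc r) \<le> P r"
    using assms(2,3) r unfolding weakly_decr_def by auto
  have "?A \<subseteq> ?B \<union> {Q (Suc r)<..Q r}"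
  proof
    fix c assume c: "c \<in> ?A"
    show "c \<in> ?B \<union> {Q (Suc r)<..Q r}"
    proof (cases "c \<le> Q r")
      case False
      hence rc: "(r, c) \<in> skew_cells m P Q" using c r P_le by (auto simp: skew_cells_def)
      have "U r c < U (Suc r) c" using U c rc unfolding sstab_def by auto
      thus ?thesis using c rc by auto
    qed (use c in \<open>auto simp: skew_cells_def\<close>)
  qed
  hence "card ?A \<le> card (?B \<union> {Q (Suc r)<..Q r})"
    by (intro card_mono) (auto intro: finite_row_cells)
  also have "\<dots> \<le> card ?B + card {Q (Suc r)<..Q r}" by (rule card_Un_le)
  finally show ?thesis using Q_le by (simp add: row_count_def)
qed

lemma gt_inequalities_row_count:
  "sstab n m P Q U \<Longrightarrow> weakly_decr m P \<Longrightarrow> weakly_decr m Q \<Longrightarrow>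
   gt_inequalities m (row_count m P Q U)"
  unfolding gt_inequalities_def using row_count_mono row_count_interlace by blast

lemma row_count_edge:
  assumes "(r0, c0) \<in> skew_cells m P Q" "S r0 c0 = T r0 c0 + 1" "T r0 c0 = i"
    "\<forall>(r', c') \<in> skew_cells m P Q. (r', c') \<noteq> (r0, c0) \<longrightarrow> S r' c' = T r' c'"
  shows "row_count m P Q S r a =
           (if (r, a) = (r0, int i) then row_count m P Q T r a - 1 else row_count m P Q T r a)"
proof (cases "(r, a) = (r0, int i)")
  case True
  let ?cells = "{c. (r, c) \<in> skew_cells m P Q \<and> int (S r c) \<le> a}"
  have "{c. (r, c) \<in> skew_cells m P Q \<and> int (T r c) \<le> a} = insert c0 ?cells"
    using assms True by force
  moreover have "c0 \<notin> ?cells" using assms True by auto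
  ultimately show ?thesis
    using True finite_row_cells by (simp add: row_count_def card_insert_disjoint)
next
  case False
  hence "{c. (r, c) \<in> skew_cells m P Q \<and> int (S r c) \<le> a} =
         {c. (r, c) \<in> skew_cells m P Q \<and> int (T r c) \<le> a}"
    using assms by force
  thus ?thesis using False by (simp add: row_count_def)
qed

lemma Cset_eq_image_rows: "Cset m a = (\<lambda>r. a + 1 - int r) ` {1..m}"
proof -
  have "k = a + 1 - int (nat (a + 1 - k))" if "k \<in> Cset m a" for k
    using that by (simp add: Cset_def)
  moreover have "nat (a + 1 - k) \<in> {1..m}" if "k \<in> Cset m a" for k
    using that by (auto simp: Cset_def)
  ultimately show ?thesis by (force simp: Cset_def)
qed

lemma inj_on_rows: "inj_on (\<lambda>r::nat. a + 1 - int r) R"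
  by (rule inj_onI) simp

lemma prod_Cset_rows: "(\<Prod>k\<in>Cset m a. f k) = (\<Prod>r\<in>{1..m}. f (a + 1 - int r))"
  unfolding Cset_eq_image_rows by (simp add: prod.reindex[OF inj_on_rows])

lemma prod_Cset_minus_rows:
  assumes "s \<in> {1..m}"
  shows "(\<Prod>k\<in>Cset m a - {a + 1 - int s}. f k) = (\<Prod>r\<in>{1..m} - {s}. f (a + 1 - int r))"
proof -
  have "Cset m a - {a + 1 - int s} = (\<lambda>r. a + 1 - int r) ` ({1..m} - {s})"
    using assms unfolding Cset_eq_image_rows by (auto simp: image_set_diff[OF inj_on_rows])
  thus ?thesis by (simp add: prod.reindex[OF inj_on_rows])
qed

context
  fixes m :: nat and P Q :: "nat \<Rightarrow> nat" and T :: "nat \<Rightarrow> nat \<Rightarrow> nat" and s :: nat and a :: int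
  assumes s: "s \<in> {1..m}"
begin

lemma Xnum_rows:
  "Xnum m P Q T a (a + 1 - int s) = of_int (\<Prod>r\<in>{1..m}.
     row_count m P Q T s a - row_count m P Q T r (a + 1) + int r - int s - 1)"
  unfolding Xnum_def of_int_prod prod_Cset_rows[where a = "a + 1"]
  by (intro prod.cong refl) (simp add: gt_eq_row_count)

lemma Xden_rows:
  "Xden m P Q T a (a + 1 - int s) = of_int (\<Prod>r\<in>{1..m} - {s}.
     row_count m P Q T s a - row_count m P Q T r a + int r - int s - 1)"
  unfolding Xden_def of_int_prod prod_Cset_minus_rows[OF s]
  by (intro prod.cong refl) (simp add: gt_eq_row_count)

lemma Ynum_rows:
  "Ynum m P Q T a (a + 1 - int s) = of_int (\<Prod>r\<in>{1..m}.
     row_count m P Q T s a - row_count m P Q T r (a - 1) + int r - int s)"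
  unfolding Ynum_def of_int_prod prod_Cset_rows[where a = "a - 1"]
  by (intro prod.cong refl) (simp add: gt_eq_row_count)

lemma Yden_rows:
  "Yden m P Q T a (a + 1 - int s) = of_int (\<Prod>r\<in>{1..m} - {s}.
     row_count m P Q T s a - row_count m P Q T r a + int r - int s)"
  unfolding Yden_def of_int_prod prod_Cset_minus_rows[OF s]
  by (intro prod.cong refl) (simp add: gt_eq_row_count)

end

locale gt_edge =
  fixes m :: nat and h h' :: "nat \<Rightarrow> int \<Rightarrow> int" and s :: nat and a :: int
  assumes gt_h: "gt_inequalities m h" and gt_h': "gt_inequalities m h'"
    and s: "1 \<le> s" "s \<le> m"
    and h'_eq: "\<And>r b. h' r b = (if (r, b) = (s, a) then h r b - 1 else h r b)"
begin

lemma below_edge_lt: "s < r \<Longrightarrow> r \<le> m \<Longrightarrow> h r a < h s a"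
  using gt_inequalities_antimono_row[OF gt_h' s(1), of r a] h'_eq[of r a] h'_eq[of s a] by simp

lemma sgn_Xnum_factor:
  assumes "r \<in> {1..m}"
  shows "sgn (h s a - h r (a + 1) + int r - int s - 1) = (if r < Suc s then -1 else 1)"
proof (cases "r \<le> s")
  case True
  have "h s a \<le> h r a" using gt_inequalities_antimono_row[OF gt_h _ True s(2)] assms by simp
  thus ?thesis using gt_inequalities_mono[OF gt_h, of r a] True by simp
next
  case False
  then obtain q where q: "r = Suc q" "s \<le> q" by (cases r) auto
  have "h r (a + 1) = h' r (a + 1)" using h'_eq by simp
  also have "\<dots> \<le> h' q a" using gt_inequalities_interlace[OF gt_h'] q s assms by simp
  also have "\<dots> \<le> h' s a" using gt_inequalities_antimono_row[OF gt_h' s(1) q(2)] q assms by simp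
  finally show ?thesis using False h'_eq[of s a] by simp
qed

lemma sgn_Xden_factor:
  assumes "r \<in> {1..m} - {s}"
  shows "sgn (h s a - h r a + int r - int s - 1) = (if r < s then -1 else 1)"
  using gt_inequalities_antimono_row[OF gt_h, of r s a] below_edge_lt[of r] assms s
  by (cases "r < s") auto

lemma sgn_Ynum_factor:
  assumes "r \<in> {1..m}"
  shows "sgn (h s a - h r (a - 1) + int r - int s) = (if r < s then -1 else 1)"
proof -
  consider "r < s" | "r = s" | "s < r" by linarith
  thus ?thesis
  proof cases
    case 1
    have "h s a \<le> h (Suc r) a" using gt_inequalities_antimono_row[OF gt_h] 1 s by simp
    also have "\<dots> \<le> h r (a - 1)"
      using gt_inequalities_interlace[OF gt_h, of r "a - 1"] 1 assms s by simp
    finally show ?thesis using 1 by simp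
  next
    case 2
    have "h s (a - 1) = h' s (a - 1)" using h'_eq by simp
    also have "\<dots> \<le> h' s a" using gt_inequalities_mono[OF gt_h', of s "a - 1"] by simp
    finally show ?thesis using 2 h'_eq[of s a] by simp
  next
    case 3
    have "h r (a - 1) \<le> h r a" using gt_inequalities_mono[OF gt_h, of r "a - 1"] by simp
    also have "\<dots> \<le> h s a" using gt_inequalities_antimono_row[OF gt_h s(1)] 3 assms by simp
    finally show ?thesis using 3 by simp
  qed
qed

lemma sgn_Yden_factor:
  assumes "r \<in> {1..m} - {s}"
  shows "sgn (h s a - h r a + int r - int s) = (if r < s then -1 else 1)"
  using gt_inequalities_antimono_row[OF gt_h, of r s a] gt_inequalities_antimono_row[OF gt_h, of s r a]
    assms s by (cases "r < s") auto

lemma card_rows_above: "card {r \<in> {1..m}. r < t} = t - 1" if "t \<le> Suc m" for t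
proof -
  have "{r \<in> {1..m}. r < t} = {1..<t}" using that by auto
  thus ?thesis by simp
qed

lemma card_rows_above_minus: "card {r \<in> {1..m} - {s}. r < s} = s - 1"
proof -
  have "{r \<in> {1..m} - {s}. r < s} = {1..<s}" using s by auto
  thus ?thesis by simp
qed

lemma sgn_Xnum: "sgn (\<Prod>r\<in>{1..m}. h s a - h r (a + 1) + int r - int s - 1) = - ((-1) ^ (s - 1))"
proof -
  have "sgn (\<Prod>r\<in>{1..m}. h s a - h r (a + 1) + int r - int s - 1) = (-1) ^ card {r \<in> {1..m}. r < Suc s}"
    by (rule sgn_prod_sign_pattern) (simp_all only: finite_atLeastAtMost sgn_Xnum_factor)
  also have "\<dots> = - ((-1) ^ (s - 1))"
    using card_rows_above[of "Suc s"] s by (cases s) simp_all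
  finally show ?thesis .
qed

lemma sgn_Xden: "sgn (\<Prod>r\<in>{1..m} - {s}. h s a - h r a + int r - int s - 1) = (-1) ^ (s - 1)"
  unfolding card_rows_above_minus[symmetric]
  by (rule sgn_prod_sign_pattern) (simp_all only: finite_Diff finite_atLeastAtMost sgn_Xden_factor)

lemma sgn_Ynum: "sgn (\<Prod>r\<in>{1..m}. h s a - h r (a - 1) + int r - int s) = (-1) ^ (s - 1)"
  unfolding card_rows_above[of s, symmetric, OF le_SucI[OF s(2)]]
  by (rule sgn_prod_sign_pattern) (simp_all only: finite_atLeastAtMost sgn_Ynum_factor)

lemma sgn_Yden: "sgn (\<Prod>r\<in>{1..m} - {s}. h s a - h r a + int r - int s) = (-1) ^ (s - 1)"
  unfolding card_rows_above_minus[symmetric]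
  by (rule sgn_prod_sign_pattern) (simp_all only: finite_Diff finite_atLeastAtMost sgn_Yden_factor)

end

theorem lemma6p1:
  fixes m n :: nat and P Q :: "nat \<Rightarrow> nat" and S T :: "nat \<Rightarrow> nat \<Rightarrow> nat"
    and i :: nat and j :: int
  assumes "2 \<le> n" and "n \<le> m"
    and "weakly_decr m P" and "weakly_decr m Q"
    and "\<forall>r. 1 \<le> r \<and> r \<le> m \<longrightarrow> Q r \<le> P r"
    and "\<forall>c. card {r. (r, c) \<in> skew_cells m P Q} \<le> n"
    and "skew_edge n m P Q S i T"
    and "j \<in> Cset m (int i)"
    and "gt m P Q T (int i) j \<noteq> gt m P Q S (int i) j"
  shows "Xden m P Q T (int i) j \<noteq> 0 \<and> Yden m P Q T (int i) j \<noteq> 0 \<and>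
         Xcoef m P Q T (int i) j > 0 \<and> Ycoef m P Q T (int i) j > 0"
proof -
  obtain r0 c0 where cell: "(r0, c0) \<in> skew_cells m P Q" "S r0 c0 = T r0 c0 + 1" "T r0 c0 = i"
    "\<forall>(r', c') \<in> skew_cells m P Q. (r', c') \<noteq> (r0, c0) \<longrightarrow> S r' c' = T r' c'"
    and tableaux: "sstab n m P Q S" "sstab n m P Q T"
    using assms(7) unfolding skew_edge_def by blast
  define s where "s = nat (int i + 1 - j)"
  have s_row: "s \<in> {1..m}" and j: "j = int i + 1 - int s"
    using assms(8) by (auto simp: Cset_def s_def)
  have "gt m P Q U (int i) j = row_count m P Q U s (int i)" for U
    by (simp add: gt_eq_row_count s_def)
  hence "s = r0" using assms(9) row_count_edge[OF cell, of s "int i"] by (auto split: if_splits)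
  then interpret gt_edge m "row_count m P Q T" "row_count m P Q S" s "int i"
    using s_row row_count_edge[OF cell] gt_inequalities_row_count[OF _ assms(3,4)] tableaux
    by unfold_locales auto
  have "Xden m P Q T (int i) j \<noteq> 0" "Yden m P Q T (int i) j \<noteq> 0"
    unfolding j Xden_rows[OF s_row] Yden_rows[OF s_row] of_int_eq_0_iff
    using sgn_Xden sgn_Yden by (metis power_eq_0_iff sgn_0 zero_neq_neg_one)+
  moreover have "Xcoef m P Q T (int i) j > 0"
    unfolding Xcoef_def j Xnum_rows[OF s_row] Xden_rows[OF s_row]
    by (rule of_int_minus_divide_pos_if_sgn_eq_minus[OF sgn_Xnum sgn_Xden])
  moreover have "Ycoef m P Q T (int i) j > 0"
    unfolding Ycoef_def j Ynum_rows[OF s_row] Yden_rows[OF s_row]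
    by (rule of_int_divide_pos_if_sgn_eq[OF sgn_Ynum sgn_Yden])
  ultimately show ?thesis by blast
qed

end
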